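(* Let $G=(V_G,E_G)$ and $H=(V_H,E_H)$ be two vertex-disjoint digraphs. Then: 1. $\mathrm{dpw}(G\oplus H)=\max\{\mathrm{dpw}(G),\mathrm{dpw}(H)\}$; 2. $\mathrm{dpw}(G\oslash H)=\max\{\mathrm{dpw}(G),\mathrm{dpw}(H)\}$; 3. for every directed union $G\ominus H$ of $G$ and $H$, $\mathrm{dpw}(G\ominus H)=\max\{\mathrm{dpw}(G),\mathrm{dpw}(H)\}$; 4. $\mathrm{dpw}(G\otimes H)=\min\{\mathrm{dpw}(G)+|V_H|,\ \mathrm{dpw}(H)+|V_G|\}$.
   Context: Digraphs are finite, without loops or multiple arcs; arcs are ordered pairs $(u,v)$ with $u\neq v$. A directed path-decomposition of a digraph $G=(V,E)$ is a sequence $(X_1,\ldots,X_r)$ of subsets of $V$ (bags) such that: (i) $X_1\cup\cdots\cup X_r=V$; (ii) for each $(u,v)\in E$ there are $i\le j$ with $u\in X_i$, $v\in X_j$; (iii) if $u\in X_i$ and $u\in X_j$ with $i\le j$, then $u\in X_\ell$ for all $i\le \ell\le j$. Its width is $\max_i |X_i|-1$, and the directed path-width $\mathrm{dpw}(G)$ is the minimum width of a directed path-decomposition of $G$. For vertex-disjoint digraphs $G=(V_G,E_G)$, $H=(V_H,E_H)$: the disjoint union $G\oplus H$ has vertex set $V_G\cup V_H$ and arc set $E_G\cup E_H$; the series composition $G\otimes H$ is $G\oplus H$ plus all arcs $(u,v)$ and $(v,u)$ with $u\in V_G$, $v\in V_H$; the order composition $G\oslash H$ is $G\oplus H$ plus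 all arcs $(u,v)$ with $u\in V_G$, $v\in V_H$; a directed union $G\ominus H$ is any digraph on $V_G\cup V_H$ obtained from $G\oplus H$ by adding some (possibly none or all) arcs $(u,v)$ with $u\in V_G$, $v\in V_H$ (so $G,H$ are induced subdigraphs and there is no arc from $V_H$ to $V_G$). *)

theory Defs
  imports Main
begin

definition digraph :: "'a set \<Rightarrow> ('a \<times> 'a) set \<Rightarrow> bool" where
  "digraph V E \<longleftrightarrow> finite V \<and> E \<subseteq> V \<times> V \<and> (\<forall>(u,v)\<in>E. u \<noteq> v)"

text \<open>Directed path-decomposition (X_1,...,X_r), r >= 1, as a nonempty list of bags
(list index i corresponds to bag X_(i+1)).\<close>

definition is_dpd :: "'a set \<Rightarrow> ('a \<times> 'a) set \<Rightarrow> 'a set list \<Rightarrow> bool" where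
  "is_dpd V E Xs \<longleftrightarrow>
     Xs \<noteq> [] \<and>
     \<Union> (set Xs) = V \<and>
     (\<forall>(u,v)\<in>E. \<exists>i j. i \<le> j \<and> j < length Xs \<and> u \<in> Xs ! i \<and> v \<in> Xs ! j) \<and>
     (\<forall>u i j l. i \<le> l \<and> l \<le> j \<and> j < length Xs \<and> u \<in> Xs ! i \<and> u \<in> Xs ! j
                \<longrightarrow> u \<in> Xs ! l)"

definition dpd_width :: "'a set list \<Rightarrow> int" where
  "dpd_width Xs = int (Max (card ` set Xs)) - 1"

definition dpw :: "'a set \<Rightarrow> ('a \<times> 'a) set \<Rightarrow> int" where
  "dpw V E = Min {dpd_width Xs | Xs. is_dpd V E Xs}"

text \<open>Operations on vertex-disjoint digraphs (arc sets; vertex set is always V_G \<union> V_H).\<close>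

definition disj_union_arcs :: "('a \<times> 'a) set \<Rightarrow> ('a \<times> 'a) set \<Rightarrow> ('a \<times> 'a) set" where
  "disj_union_arcs EG EH = EG \<union> EH"

definition series_arcs ::
  "'a set \<Rightarrow> ('a \<times> 'a) set \<Rightarrow> 'a set \<Rightarrow> ('a \<times> 'a) set \<Rightarrow> ('a \<times> 'a) set" where
  "series_arcs VG EG VH EH = EG \<union> EH \<union> (VG \<times> VH) \<union> (VH \<times> VG)"

definition order_arcs ::
  "'a set \<Rightarrow> ('a \<times> 'a) set \<Rightarrow> 'a set \<Rightarrow> ('a \<times> 'a) set \<Rightarrow> ('a \<times> 'a) set" where
  "order_arcs VG EG VH EH = EG \<union> EH \<union> (VG \<times> VH)"

definition directed_union_arcs ::
  "'a set \<Rightarrow> ('a \<times> 'a) set \<Rightarrow> 'a set \<Rightarrow> ('a \<times> 'a) set \<Rightarrow> ('a \<times> 'a) set set" where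
  "directed_union_arcs VG EG VH EH = {EG \<union> EH \<union> F | F. F \<subseteq> VG \<times> VH}"

end

theory Submission
  imports Defs
begin

text \<open>
  Concatenating decompositions of \<open>G\<close> and \<open>H\<close> decomposes every directed union, because the
  extra arcs all point from an earlier bag to a later one; and restricting a decomposition to a
  subgraph shows that \<open>dpw\<close> is monotone.  For the series composition, adding \<open>V\<^sub>H\<close> to every
  bag of a decomposition of \<open>G\<close> gives the upper bound.  Conversely, in a decomposition of
  \<open>G \<otimes> H\<close> every vertex occupies an interval of bags, and since arcs go both ways between
  \<open>V\<^sub>G\<close> and \<open>V\<^sub>H\<close>, the interval of each vertex of one side reaches the interval of each vertex
  of the other side.  Comparing the latest first occurrence and the earliest last occurrence
  over \<open>V\<^sub>H\<close> yields a window of bags which one side fills completely while every vertex of the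
  other side occurs in it; the window restricted to the other side decomposes it with bags
  that are smaller by the size of the full side.
\<close>

lemma is_dpdI:
  assumes "Xs \<noteq> []" and "\<Union> (set Xs) = V"
    and "\<And>u v. (u, v) \<in> E \<Longrightarrow> \<exists>i j. i \<le> j \<and> j < length Xs \<and> u \<in> Xs ! i \<and> v \<in> Xs ! j"
    and "\<And>u i j l. \<lbrakk>i \<le> l; l \<le> j; j < length Xs; u \<in> Xs ! i; u \<in> Xs ! j\<rbrakk> \<Longrightarrow> u \<in> Xs ! l"
  shows "is_dpd V E Xs"
  using assms unfolding is_dpd_def by blast

lemma is_dpd_nonempty: "is_dpd V E Xs \<Longrightarrow> Xs \<noteq> []"
  unfolding is_dpd_def by blast

lemma is_dpd_bag_subset: "is_dpd V E Xs \<Longrightarrow> X \<in> set Xs \<Longrightarrow> X \<subseteq> V"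
  unfolding is_dpd_def by blast

lemma is_dpd_cover:
  assumes "is_dpd V E Xs" and "v \<in> V"
  shows "\<exists>i < length Xs. v \<in> Xs ! i"
proof -
  have "v \<in> \<Union> (set Xs)"
    using assms unfolding is_dpd_def by blast
  then show ?thesis
    by (metis UnionE in_set_conv_nth)
qed

lemma is_dpd_arc:
  "is_dpd V E Xs \<Longrightarrow> (u, v) \<in> E \<Longrightarrow> \<exists>i j. i \<le> j \<and> j < length Xs \<and> u \<in> Xs ! i \<and> v \<in> Xs ! j"
  unfolding is_dpd_def by blast

lemma is_dpd_convex:
  "\<lbrakk>is_dpd V E Xs; i \<le> l; l \<le> j; j < length Xs; u \<in> Xs ! i; u \<in> Xs ! j\<rbrakk> \<Longrightarrow> u \<in> Xs ! l"
  unfolding is_dpd_def by blast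

lemma is_dpd_arcs_subset:
  assumes Xs: "is_dpd V E Xs"
  shows "E \<subseteq> V \<times> V"
proof (rule subrelI)
  fix u v assume "(u, v) \<in> E"
  then obtain i j where "j < length Xs" "i \<le> j" "u \<in> Xs ! i" "v \<in> Xs ! j"
    using is_dpd_arc[OF Xs] by blast
  then show "(u, v) \<in> V \<times> V"
    using is_dpd_bag_subset[OF Xs] nth_mem by (meson SigmaI le_less_trans subsetD)
qed

definition first_bag :: "'a set list \<Rightarrow> 'a \<Rightarrow> nat" where
  "first_bag Xs v = Min {i. i < length Xs \<and> v \<in> Xs ! i}"

definition last_bag :: "'a set list \<Rightarrow> 'a \<Rightarrow> nat" where
  "last_bag Xs v = Max {i. i < length Xs \<and> v \<in> Xs ! i}"

lemma
  assumes "is_dpd V E Xs" and "v \<in> V"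
  shows first_le_last_bag: "first_bag Xs v \<le> last_bag Xs v"
    and in_bag_iff_first_last:
      "i < length Xs \<and> v \<in> Xs ! i \<longleftrightarrow> first_bag Xs v \<le> i \<and> i \<le> last_bag Xs v"
proof -
  define P where "P = {i. i < length Xs \<and> v \<in> Xs ! i}"
  have "finite P" "P \<noteq> {}"
    using is_dpd_cover[OF assms] by (auto simp: P_def)
  then have first: "first_bag Xs v \<in> P" and last: "last_bag Xs v \<in> P"
    and bounds: "\<And>i. i \<in> P \<Longrightarrow> first_bag Xs v \<le> i \<and> i \<le> last_bag Xs v"
    unfolding first_bag_def last_bag_def P_def[symmetric] by auto
  then show "first_bag Xs v \<le> last_bag Xs v"
    by blast
  show "i < length Xs \<and> v \<in> Xs ! i \<longleftrightarrow> first_bag Xs v \<le> i \<and> i \<le> last_bag Xs v"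
  proof
    assume "i < length Xs \<and> v \<in> Xs ! i"
    then show "first_bag Xs v \<le> i \<and> i \<le> last_bag Xs v"
      using bounds by (simp add: P_def)
  next
    assume "first_bag Xs v \<le> i \<and> i \<le> last_bag Xs v"
    moreover have "v \<in> Xs ! first_bag Xs v" "v \<in> Xs ! last_bag Xs v" "last_bag Xs v < length Xs"
      using first last by (simp_all add: P_def)
    ultimately show "i < length Xs \<and> v \<in> Xs ! i"
      using is_dpd_convex[OF assms(1)] by (meson le_less_trans)
  qed
qed

lemma last_bag_less_length:
  assumes "is_dpd V E Xs" and "v \<in> V"
  shows "last_bag Xs v < length Xs"
  using in_bag_iff_first_last[OF assms, of "last_bag Xs v"] first_le_last_bag[OF assms] by simp

lemma arc_first_bag_le_last_bag:
  assumes Xs: "is_dpd V E Xs" and uv: "(u, v) \<in> E"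
  shows "first_bag Xs u \<le> last_bag Xs v"
proof -
  obtain i j where "i \<le> j" "j < length Xs" "u \<in> Xs ! i" "v \<in> Xs ! j"
    using is_dpd_arc[OF Xs uv] by blast
  moreover have "u \<in> V" "v \<in> V"
    using is_dpd_arcs_subset[OF Xs] uv by auto
  ultimately have "first_bag Xs u \<le> i" "j \<le> last_bag Xs v"
    using in_bag_iff_first_last[OF Xs] by (meson order.strict_trans1)+
  with \<open>i \<le> j\<close> show ?thesis
    by linarith
qed

lemma exists_bag_in_window:
  assumes Xs: "is_dpd V E Xs" and "v \<in> V" and "s \<le> t"
    and "first_bag Xs v \<le> t" and "s \<le> last_bag Xs v"
  shows "\<exists>i \<in> {s..t}. v \<in> Xs ! i"
proof
  show "max s (first_bag Xs v) \<in> {s..t}"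
    using assms(3,4) by simp
  show "v \<in> Xs ! max s (first_bag Xs v)"
    using in_bag_iff_first_last[OF Xs \<open>v \<in> V\<close>, of "max s (first_bag Xs v)"]
      first_le_last_bag[OF Xs \<open>v \<in> V\<close>] assms(5) by simp
qed

lemma subset_bags_in_window:
  assumes Xs: "is_dpd V E Xs" and "A \<subseteq> V"
    and "\<forall>v \<in> A. first_bag Xs v \<le> s \<and> t \<le> last_bag Xs v"
  shows "\<forall>i \<in> {s..t}. A \<subseteq> Xs ! i"
  using assms in_bag_iff_first_last[OF Xs] by fastforce

lemma arc_in_window:
  assumes Xs: "is_dpd V E Xs" and uv: "(u, v) \<in> E" and "t < length Xs"
    and u: "i0 \<in> {s..t}" "u \<in> Xs ! i0" and v: "j0 \<in> {s..t}" "v \<in> Xs ! j0"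
  shows "\<exists>i j. s \<le> i \<and> i \<le> j \<and> j \<le> t \<and> u \<in> Xs ! i \<and> v \<in> Xs ! j"
proof -
  have "u \<in> V" "v \<in> V"
    using is_dpd_arcs_subset[OF Xs] uv by auto
  have u_bags: "first_bag Xs u \<le> i0 \<and> i0 \<le> last_bag Xs u"
    using in_bag_iff_first_last[OF Xs \<open>u \<in> V\<close>, of i0] u \<open>t < length Xs\<close> by simp
  have v_bags: "first_bag Xs v \<le> j0 \<and> j0 \<le> last_bag Xs v"
    using in_bag_iff_first_last[OF Xs \<open>v \<in> V\<close>, of j0] v \<open>t < length Xs\<close> by simp
  define a where "a = max s (first_bag Xs u)"
  define b where "b = min t (last_bag Xs v)"
  have "u \<in> Xs ! a"
    using in_bag_iff_first_last[OF Xs \<open>u \<in> V\<close>, of a] u_bags u by (simp add: a_def)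
  moreover have "v \<in> Xs ! b"
    using in_bag_iff_first_last[OF Xs \<open>v \<in> V\<close>, of b] v_bags v by (simp add: b_def)
  moreover have "s \<le> a" "a \<le> b" "b \<le> t"
    using arc_first_bag_le_last_bag[OF Xs uv] u_bags v_bags u v unfolding a_def b_def by auto
  ultimately show ?thesis
    by blast
qed

lemma card_le_dpd_width: "X \<in> set Xs \<Longrightarrow> int (card X) \<le> dpd_width Xs + 1"
  unfolding dpd_width_def by simp

lemma dpd_width_le_iff:
  "Xs \<noteq> [] \<Longrightarrow> dpd_width Xs \<le> w \<longleftrightarrow> (\<forall>X \<in> set Xs. int (card X) \<le> w + 1)"
proof -
  assume "Xs \<noteq> []"
  then have "Max (card ` set Xs) \<in> card ` set Xs"
    by simp
  then show ?thesis
    using card_le_dpd_width[of _ Xs] unfolding dpd_width_def by force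
qed

lemma finite_dpd_widths: "finite V \<Longrightarrow> finite {dpd_width Xs | Xs. is_dpd V E Xs}"
proof (rule finite_subset)
  assume "finite V"
  show "{dpd_width Xs | Xs. is_dpd V E Xs} \<subseteq> {-1 .. int (card V) - 1}"
  proof clarify
    fix Xs assume Xs: "is_dpd V E Xs"
    have "\<forall>X \<in> set Xs. int (card X) \<le> int (card V)"
      using is_dpd_bag_subset[OF Xs] card_mono[OF \<open>finite V\<close>] by simp
    then have "dpd_width Xs \<le> int (card V) - 1"
      using dpd_width_le_iff[OF is_dpd_nonempty[OF Xs], of "int (card V) - 1"] by simp
    then show "dpd_width Xs \<in> {-1 .. int (card V) - 1}"
      by (simp add: dpd_width_def)
  qed
qed simp

lemma dpw_le: "finite V \<Longrightarrow> is_dpd V E Xs \<Longrightarrow> dpw V E \<le> dpd_width Xs"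
  unfolding dpw_def by (rule Min_le[OF finite_dpd_widths]) auto

lemma dpw_attained:
  assumes "finite V" and "E \<subseteq> V \<times> V"
  obtains Xs where "is_dpd V E Xs" and "dpw V E = dpd_width Xs"
proof -
  have "is_dpd V E [V]"
    using assms(2) unfolding is_dpd_def by auto
  then have "dpw V E \<in> {dpd_width Xs | Xs. is_dpd V E Xs}"
    unfolding dpw_def by (intro Min_in finite_dpd_widths assms(1)) auto
  then show ?thesis
    using that by blast
qed

lemma dpw_geI:
  assumes "finite V" and "E \<subseteq> V \<times> V" and "\<And>Xs. is_dpd V E Xs \<Longrightarrow> w \<le> dpd_width Xs"
  shows "w \<le> dpw V E"
  using dpw_attained[OF assms(1,2)] assms(3) by metis

lemma is_dpd_restrict:
  assumes Xs: "is_dpd V E Xs" and "V' \<subseteq> V" and "E' \<subseteq> E" and "E' \<subseteq> V' \<times> V'"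
  shows "is_dpd V' E' (map (\<lambda>X. X \<inter> V') Xs)"
proof (rule is_dpdI)
  show "map (\<lambda>X. X \<inter> V') Xs \<noteq> []"
    using is_dpd_nonempty[OF Xs] by simp
  show "\<Union> (set (map (\<lambda>X. X \<inter> V') Xs)) = V'"
    using Xs \<open>V' \<subseteq> V\<close> unfolding is_dpd_def by auto
next
  fix u v assume "(u, v) \<in> E'"
  then show "\<exists>i j. i \<le> j \<and> j < length (map (\<lambda>X. X \<inter> V') Xs)
      \<and> u \<in> map (\<lambda>X. X \<inter> V') Xs ! i \<and> v \<in> map (\<lambda>X. X \<inter> V') Xs ! j"
    using is_dpd_arc[OF Xs] assms(3,4) by fastforce
next
  fix u i j l
  assume "i \<le> l" "l \<le> j" "j < length (map (\<lambda>X. X \<inter> V') Xs)"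
    "u \<in> map (\<lambda>X. X \<inter> V') Xs ! i" "u \<in> map (\<lambda>X. X \<inter> V') Xs ! j"
  then show "u \<in> map (\<lambda>X. X \<inter> V') Xs ! l"
    using is_dpd_convex[OF Xs, of i l j u] by simp
qed

lemma is_dpd_window:
  assumes Xs: "is_dpd V E Xs" and "s \<le> t" and "t < length Xs"
    and hit: "\<forall>v \<in> V. \<exists>i \<in> {s..t}. v \<in> Xs ! i"
  shows "is_dpd V E (map ((!) Xs) [s..<Suc t])"
proof -
  let ?W = "map ((!) Xs) [s..<Suc t]"
  have nth_W: "?W ! k = Xs ! (s + k)" if "k < length ?W" for k
    using that by (simp del: upt_Suc)
  show ?thesis
  proof (rule is_dpdI)
    show "?W \<noteq> []"
      using \<open>s \<le> t\<close> by simp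
    have set_W: "set ?W = (!) Xs ` {s..t}"
      by (simp del: upt_Suc add: atLeastLessThanSuc_atLeastAtMost)
    have "Xs ! i \<subseteq> V" if "i \<in> {s..t}" for i
      using is_dpd_bag_subset[OF Xs] \<open>t < length Xs\<close> that by simp
    then have "\<Union> (set ?W) \<subseteq> V"
      unfolding set_W by blast
    moreover have "V \<subseteq> \<Union> (set ?W)"
      unfolding set_W using hit by (simp add: subset_iff)
    ultimately show "\<Union> (set ?W) = V"
      by (rule antisym)
  next
    fix u v assume "(u, v) \<in> E"
    moreover have "u \<in> V" "v \<in> V"
      using is_dpd_arcs_subset[OF Xs] calculation by auto
    ultimately obtain i j where "s \<le> i" "i \<le> j" "j \<le> t" "u \<in> Xs ! i" "v \<in> Xs ! j"
      using arc_in_window[OF Xs _ \<open>t < length Xs\<close>] hit by meson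
    then have "i - s \<le> j - s \<and> j - s < length ?W \<and> u \<in> ?W ! (i - s) \<and> v \<in> ?W ! (j - s)"
      by (simp add: nth_W del: upt_Suc) linarith
    then show "\<exists>i j. i \<le> j \<and> j < length ?W \<and> u \<in> ?W ! i \<and> v \<in> ?W ! j"
      by blast
  next
    fix u i j l
    assume "i \<le> l" "l \<le> j" "j < length ?W" "u \<in> ?W ! i" "u \<in> ?W ! j"
    then show "u \<in> ?W ! l"
      using is_dpd_convex[OF Xs, of "s + i" "s + l" "s + j" u] \<open>t < length Xs\<close>
      by (simp add: nth_W del: upt_Suc)
  qed
qed

lemma dpw_add_card_le_dpd_width:
  assumes Zs: "is_dpd V E Zs" and "finite V" and "s \<le> t" and "t < length Zs"
    and full: "\<forall>i \<in> {s..t}. A \<subseteq> Zs ! i"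
    and hit: "\<forall>v \<in> B. \<exists>i \<in> {s..t}. v \<in> Zs ! i"
    and "A \<inter> B = {}" and "EB \<subseteq> E" and "EB \<subseteq> B \<times> B"
  shows "dpw B EB + int (card A) \<le> dpd_width Zs"
proof -
  have bag_Zs: "Zs ! i \<in> set Zs" "Zs ! i \<subseteq> V" if "i \<in> {s..t}" for i
    using is_dpd_bag_subset[OF Zs] \<open>t < length Zs\<close> that by auto
  have finite_bag_Zs: "finite (Zs ! i)" if "i \<in> {s..t}" for i
    using bag_Zs(2)[OF that] \<open>finite V\<close> by (rule finite_subset)
  have "B \<subseteq> V"
  proof
    fix v assume "v \<in> B"
    then obtain i where "i \<in> {s..t}" "v \<in> Zs ! i"
      using hit by blast
    then show "v \<in> V"
      using bag_Zs(2) by blast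
  qed
  let ?Ys = "map (\<lambda>X. X \<inter> B) Zs"
  let ?W = "map ((!) ?Ys) [s..<Suc t]"
  have "is_dpd B EB ?Ys"
    using is_dpd_restrict[OF Zs \<open>B \<subseteq> V\<close> assms(8,9)] .
  then have "is_dpd B EB ?W"
    by (rule is_dpd_window) (use \<open>s \<le> t\<close> \<open>t < length Zs\<close> hit in auto)
  then have "dpw B EB \<le> dpd_width ?W"
    using dpw_le finite_subset[OF \<open>B \<subseteq> V\<close> \<open>finite V\<close>] by blast
  moreover have "int (card Y) \<le> dpd_width Zs - int (card A) + 1" if "Y \<in> set ?W" for Y
  proof -
    obtain i where i: "i \<in> {s..t}" and Y: "Y = Zs ! i \<inter> B"
      using \<open>Y \<in> set ?W\<close> \<open>t < length Zs\<close> by (auto simp del: upt_Suc simp: less_Suc_eq_le)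
    have "A \<subseteq> Zs ! i" "Y \<subseteq> Zs ! i"
      using full i Y by auto
    then have "card Y + card A = card (Y \<union> A)"
      using finite_bag_Zs[OF i] \<open>A \<inter> B = {}\<close> Y
      by (subst card_Un_disjoint) (auto intro: finite_subset)
    also have "\<dots> \<le> card (Zs ! i)"
      using finite_bag_Zs[OF i] \<open>A \<subseteq> Zs ! i\<close> \<open>Y \<subseteq> Zs ! i\<close> by (intro card_mono) auto
    finally show ?thesis
      using card_le_dpd_width[OF bag_Zs(1)[OF i]] by linarith
  qed
  then have "dpd_width ?W \<le> dpd_width Zs - int (card A)"
    using dpd_width_le_iff[of ?W] \<open>s \<le> t\<close> by simp
  ultimately show ?thesis
    by linarith
qed

lemma dpw_subgraph_le:
  assumes "finite V" and "E \<subseteq> V \<times> V" and "V' \<subseteq> V" and "E' \<subseteq> E" and "E' \<subseteq> V' \<times> V'"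
  shows "dpw V' E' \<le> dpw V E"
proof (rule dpw_geI[OF assms(1,2)])
  fix Xs assume Xs: "is_dpd V E Xs"
  have hit: "\<forall>v \<in> V'. \<exists>i \<in> {0..length Xs - 1}. v \<in> Xs ! i"
    using is_dpd_cover[OF Xs] \<open>V' \<subseteq> V\<close> by fastforce
  have "dpw V' E' + int (card ({} :: 'a set)) \<le> dpd_width Xs"
    by (rule dpw_add_card_le_dpd_width[OF Xs \<open>finite V\<close>, of 0 "length Xs - 1"])
      (use hit is_dpd_nonempty[OF Xs] assms(4,5) in auto)
  then show "dpw V' E' \<le> dpd_width Xs"
    by simp
qed

lemma is_dpd_append:
  assumes Xs: "is_dpd VG EG Xs" and Ys: "is_dpd VH EH Ys" and disjoint: "VG \<inter> VH = {}"
    and "E \<subseteq> EG \<union> EH \<union> VG \<times> VH"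
  shows "is_dpd (VG \<union> VH) E (Xs @ Ys)"
proof (rule is_dpdI)
  show "Xs @ Ys \<noteq> []"
    using is_dpd_nonempty[OF Xs] by simp
  show "\<Union> (set (Xs @ Ys)) = VG \<union> VH"
    using Xs Ys unfolding is_dpd_def by auto
next
  fix u v assume "(u, v) \<in> E"
  then consider "(u, v) \<in> EG" | "(u, v) \<in> EH" | "u \<in> VG" "v \<in> VH"
    using assms(4) by auto
  then show "\<exists>i j. i \<le> j \<and> j < length (Xs @ Ys) \<and> u \<in> (Xs @ Ys) ! i \<and> v \<in> (Xs @ Ys) ! j"
  proof cases
    case 1
    then obtain i j where "i \<le> j" "j < length Xs" "u \<in> Xs ! i" "v \<in> Xs ! j"
      using is_dpd_arc[OF Xs] by blast
    then show ?thesis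
      by (intro exI[of _ i] exI[of _ j]) (auto simp: nth_append)
  next
    case 2
    then obtain i j where "i \<le> j" "j < length Ys" "u \<in> Ys ! i" "v \<in> Ys ! j"
      using is_dpd_arc[OF Ys] by blast
    then show ?thesis
      by (intro exI[of _ "length Xs + i"] exI[of _ "length Xs + j"]) (auto simp: nth_append)
  next
    case 3
    then obtain i j where "i < length Xs" "u \<in> Xs ! i" "j < length Ys" "v \<in> Ys ! j"
      using is_dpd_cover[OF Xs] is_dpd_cover[OF Ys] by meson
    then show ?thesis
      by (intro exI[of _ i] exI[of _ "length Xs + j"]) (auto simp: nth_append)
  qed
next
  fix u i j l
  assume il: "i \<le> l" and lj: "l \<le> j" and j: "j < length (Xs @ Ys)"
    and ui: "u \<in> (Xs @ Ys) ! i" and uj: "u \<in> (Xs @ Ys) ! j"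
  consider "j < length Xs" | "length Xs \<le> i" | "i < length Xs" "length Xs \<le> j"
    by linarith
  then show "u \<in> (Xs @ Ys) ! l"
  proof cases
    case 1
    then show ?thesis
      using is_dpd_convex[OF Xs, of i l j u] il lj ui uj by (simp add: nth_append)
  next
    case 2
    then show ?thesis
      using is_dpd_convex[OF Ys, of "i - length Xs" "l - length Xs" "j - length Xs" u] il lj j ui uj
      by (simp add: nth_append)
  next
    case 3
    then have "u \<in> Xs ! i" "u \<in> Ys ! (j - length Xs)" "j - length Xs < length Ys"
      using j ui uj by (auto simp: nth_append)
    then have "u \<in> VG" "u \<in> VH"
      using is_dpd_bag_subset[OF Xs] is_dpd_bag_subset[OF Ys] nth_mem \<open>i < length Xs\<close> by blast+
    then show ?thesis
      using disjoint by blast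
  qed
qed

lemma dpw_directed_union:
  assumes G: "digraph VG EG" and H: "digraph VH EH" and "VG \<inter> VH = {}" and "F \<subseteq> VG \<times> VH"
  shows "dpw (VG \<union> VH) (EG \<union> EH \<union> F) = max (dpw VG EG) (dpw VH EH)"
proof (rule antisym)
  have "finite VG" "EG \<subseteq> VG \<times> VG" "finite VH" "EH \<subseteq> VH \<times> VH"
    using G H unfolding digraph_def by auto
  moreover have "finite (VG \<union> VH)" "EG \<union> EH \<union> F \<subseteq> (VG \<union> VH) \<times> (VG \<union> VH)"
    using calculation \<open>F \<subseteq> VG \<times> VH\<close> by auto
  ultimately have "dpw VG EG \<le> dpw (VG \<union> VH) (EG \<union> EH \<union> F)"
    and "dpw VH EH \<le> dpw (VG \<union> VH) (EG \<union> EH \<union> F)"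
    by (auto intro!: dpw_subgraph_le)
  then show "max (dpw VG EG) (dpw VH EH) \<le> dpw (VG \<union> VH) (EG \<union> EH \<union> F)"
    by simp
  obtain Xs where Xs: "is_dpd VG EG Xs" "dpw VG EG = dpd_width Xs"
    using dpw_attained \<open>finite VG\<close> \<open>EG \<subseteq> VG \<times> VG\<close> by blast
  obtain Ys where Ys: "is_dpd VH EH Ys" "dpw VH EH = dpd_width Ys"
    using dpw_attained \<open>finite VH\<close> \<open>EH \<subseteq> VH \<times> VH\<close> by blast
  have "is_dpd (VG \<union> VH) (EG \<union> EH \<union> F) (Xs @ Ys)"
    by (rule is_dpd_append[OF Xs(1) Ys(1) \<open>VG \<inter> VH = {}\<close>]) (use \<open>F \<subseteq> VG \<times> VH\<close> in auto)
  then have "dpw (VG \<union> VH) (EG \<union> EH \<union> F) \<le> dpd_width (Xs @ Ys)"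
    by (rule dpw_le[OF \<open>finite (VG \<union> VH)\<close>])
  also have "\<dots> \<le> max (dpw VG EG) (dpw VH EH)"
  proof (subst dpd_width_le_iff)
    show "Xs @ Ys \<noteq> []"
      using is_dpd_nonempty[OF Xs(1)] by simp
    have "int (card X) \<le> dpw VG EG + 1" if "X \<in> set Xs" for X
      using card_le_dpd_width[OF that] Xs(2) by simp
    moreover have "int (card X) \<le> dpw VH EH + 1" if "X \<in> set Ys" for X
      using card_le_dpd_width[OF that] Ys(2) by simp
    ultimately show "\<forall>X \<in> set (Xs @ Ys). int (card X) \<le> max (dpw VG EG) (dpw VH EH) + 1"
      by fastforce
  qed
  finally show "dpw (VG \<union> VH) (EG \<union> EH \<union> F) \<le> max (dpw VG EG) (dpw VH EH)" .
qed

lemma series_arcs_commute: "series_arcs VG EG VH EH = series_arcs VH EH VG EG"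
  unfolding series_arcs_def by blast

lemma is_dpd_series_extend:
  assumes Xs: "is_dpd VG EG Xs" and "EH \<subseteq> VH \<times> VH"
  shows "is_dpd (VG \<union> VH) (series_arcs VG EG VH EH) (map (\<lambda>X. X \<union> VH) Xs)"
proof (rule is_dpdI)
  show "map (\<lambda>X. X \<union> VH) Xs \<noteq> []"
    using is_dpd_nonempty[OF Xs] by simp
  show "\<Union> (set (map (\<lambda>X. X \<union> VH) Xs)) = VG \<union> VH"
    using Xs is_dpd_nonempty[OF Xs] unfolding is_dpd_def by auto
next
  fix u v assume "(u, v) \<in> series_arcs VG EG VH EH"
  then consider "(u, v) \<in> EG" | "u \<in> VG \<union> VH" "v \<in> VH" | "u \<in> VH" "v \<in> VG"
    using \<open>EH \<subseteq> VH \<times> VH\<close> unfolding series_arcs_def by auto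
  then show "\<exists>i j. i \<le> j \<and> j < length (map (\<lambda>X. X \<union> VH) Xs)
      \<and> u \<in> map (\<lambda>X. X \<union> VH) Xs ! i \<and> v \<in> map (\<lambda>X. X \<union> VH) Xs ! j"
  proof cases
    case 1
    then show ?thesis
      using is_dpd_arc[OF Xs] by fastforce
  next
    case 2
    obtain i where "i < length Xs" "u \<in> Xs ! i \<union> VH"
      using is_dpd_cover[OF Xs] is_dpd_nonempty[OF Xs] 2 by blast
    then show ?thesis
      using 2 by (intro exI[of _ i]) auto
  next
    case 3
    then obtain i where "i < length Xs" "v \<in> Xs ! i"
      using is_dpd_cover[OF Xs] by blast
    then show ?thesis
      using 3 by (intro exI[of _ i]) auto
  qed
next
  fix u i j l
  assume "i \<le> l" "l \<le> j" "j < length (map (\<lambda>X. X \<union> VH) Xs)"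
    "u \<in> map (\<lambda>X. X \<union> VH) Xs ! i" "u \<in> map (\<lambda>X. X \<union> VH) Xs ! j"
  then show "u \<in> map (\<lambda>X. X \<union> VH) Xs ! l"
    using is_dpd_convex[OF Xs, of i l j u] by auto
qed

lemma dpw_series_le:
  assumes G: "digraph VG EG" and H: "digraph VH EH"
  shows "dpw (VG \<union> VH) (series_arcs VG EG VH EH) \<le> dpw VG EG + int (card VH)"
proof -
  have "finite VG" "EG \<subseteq> VG \<times> VG" "finite VH" "EH \<subseteq> VH \<times> VH"
    using G H unfolding digraph_def by auto
  obtain Xs where Xs: "is_dpd VG EG Xs" "dpw VG EG = dpd_width Xs"
    using dpw_attained \<open>finite VG\<close> \<open>EG \<subseteq> VG \<times> VG\<close> by blast
  let ?Ys = "map (\<lambda>X. X \<union> VH) Xs"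
  have "dpw (VG \<union> VH) (series_arcs VG EG VH EH) \<le> dpd_width ?Ys"
    using dpw_le is_dpd_series_extend[OF Xs(1) \<open>EH \<subseteq> VH \<times> VH\<close>] \<open>finite VG\<close> \<open>finite VH\<close>
    by blast
  also have "\<dots> \<le> dpd_width Xs + int (card VH)"
  proof (subst dpd_width_le_iff)
    show "?Ys \<noteq> []"
      using is_dpd_nonempty[OF Xs(1)] by simp
    have "int (card (X \<union> VH)) \<le> dpd_width Xs + int (card VH) + 1" if "X \<in> set Xs" for X
      using card_le_dpd_width[OF that] card_Un_le[of X VH] by linarith
    then show "\<forall>Y \<in> set ?Ys. int (card Y) \<le> dpd_width Xs + int (card VH) + 1"
      by simp
  qed
  finally show ?thesis
    using Xs(2) by simp
qed

lemma series_dpd_window: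
  assumes Zs: "is_dpd (VG \<union> VH) E Zs" and "finite VH"
    and GH: "VG \<times> VH \<subseteq> E" and HG: "VH \<times> VG \<subseteq> E"
  obtains s t where "s \<le> t" and "t < length Zs"
    and "(\<forall>i \<in> {s..t}. VH \<subseteq> Zs ! i) \<and> (\<forall>v \<in> VG. \<exists>i \<in> {s..t}. v \<in> Zs ! i)
      \<or> (\<forall>i \<in> {s..t}. VG \<subseteq> Zs ! i) \<and> (\<forall>v \<in> VH. \<exists>i \<in> {s..t}. v \<in> Zs ! i)"
proof (cases "VH = {}")
  case True
  have "\<forall>v \<in> VG. \<exists>i \<in> {0..length Zs - 1}. v \<in> Zs ! i"
    using is_dpd_cover[OF Zs] by fastforce
  then show ?thesis
    using that[of 0 "length Zs - 1"] is_dpd_nonempty[OF Zs] True by simp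
next
  case False
  let ?first = "first_bag Zs" and ?last = "last_bag Zs"
  have "Max (?first ` VH) \<in> ?first ` VH" "Min (?last ` VH) \<in> ?last ` VH"
    using \<open>finite VH\<close> False by simp_all
  then obtain v1 v0 where v1: "v1 \<in> VH" "Max (?first ` VH) = ?first v1"
    and v0: "v0 \<in> VH" "Min (?last ` VH) = ?last v0"
    by fastforce
  define L where "L = ?first v1"
  define R where "R = ?last v0"
  have H_bounds: "?first v \<le> L \<and> R \<le> ?last v" if "v \<in> VH" for v
  proof -
    have "?first v \<le> Max (?first ` VH)" "Min (?last ` VH) \<le> ?last v"
      using that \<open>finite VH\<close> by simp_all
    then show ?thesis
      using v0 v1 unfolding L_def R_def by simp
  qed
  have G_bounds: "?first u \<le> R \<and> L \<le> ?last u" if "u \<in> VG" for u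
    using arc_first_bag_le_last_bag[OF Zs, of u v0] arc_first_bag_le_last_bag[OF Zs, of v1 u]
      GH HG that v0 v1 unfolding L_def R_def by blast
  have "R < length Zs" "L < length Zs"
    using last_bag_less_length[OF Zs, of v0] last_bag_less_length[OF Zs, of v1]
      first_le_last_bag[OF Zs, of v1] v0 v1 unfolding L_def R_def by auto
  show ?thesis
  proof (cases "L \<le> R")
    case True
    have "\<forall>i \<in> {L..R}. VH \<subseteq> Zs ! i"
      using subset_bags_in_window[OF Zs] H_bounds by blast
    moreover have "\<forall>v \<in> VG. \<exists>i \<in> {L..R}. v \<in> Zs ! i"
      using exists_bag_in_window[OF Zs] G_bounds True by blast
    ultimately show ?thesis
      using that[of L R] True \<open>R < length Zs\<close> by blast
  next
    case False
    have "\<forall>i \<in> {R..L}. VG \<subseteq> Zs ! i"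
      using subset_bags_in_window[OF Zs] G_bounds by blast
    moreover have "\<forall>v \<in> VH. \<exists>i \<in> {R..L}. v \<in> Zs ! i"
      using exists_bag_in_window[OF Zs] H_bounds False by simp
    ultimately show ?thesis
      using that[of R L] False \<open>L < length Zs\<close> by auto
  qed
qed

lemma dpw_series_ge:
  assumes G: "digraph VG EG" and H: "digraph VH EH" and "VG \<inter> VH = {}"
  shows "min (dpw VG EG + int (card VH)) (dpw VH EH + int (card VG))
    \<le> dpw (VG \<union> VH) (series_arcs VG EG VH EH)"
proof (rule dpw_geI)
  have "finite VG" "EG \<subseteq> VG \<times> VG" "finite VH" "EH \<subseteq> VH \<times> VH"
    using G H unfolding digraph_def by auto
  then show "finite (VG \<union> VH)"
    and "series_arcs VG EG VH EH \<subseteq> (VG \<union> VH) \<times> (VG \<union> VH)"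
    unfolding series_arcs_def by auto
  fix Zs assume Zs: "is_dpd (VG \<union> VH) (series_arcs VG EG VH EH) Zs"
  obtain s t where "s \<le> t" "t < length Zs"
    and "(\<forall>i \<in> {s..t}. VH \<subseteq> Zs ! i) \<and> (\<forall>v \<in> VG. \<exists>i \<in> {s..t}. v \<in> Zs ! i)
      \<or> (\<forall>i \<in> {s..t}. VG \<subseteq> Zs ! i) \<and> (\<forall>v \<in> VH. \<exists>i \<in> {s..t}. v \<in> Zs ! i)"
    by (rule series_dpd_window[OF Zs \<open>finite VH\<close>]) (auto simp: series_arcs_def)
  then have "dpw VG EG + int (card VH) \<le> dpd_width Zs \<or> dpw VH EH + int (card VG) \<le> dpd_width Zs"
    using dpw_add_card_le_dpd_width[OF Zs \<open>finite (VG \<union> VH)\<close> \<open>s \<le> t\<close> \<open>t < length Zs\<close>]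
      \<open>VG \<inter> VH = {}\<close> \<open>EG \<subseteq> VG \<times> VG\<close> \<open>EH \<subseteq> VH \<times> VH\<close>
    by (metis Int_commute series_arcs_def sup_ge1 sup_ge2 le_supE)
  then show "min (dpw VG EG + int (card VH)) (dpw VH EH + int (card VG)) \<le> dpd_width Zs"
    by linarith
qed

theorem theorem3p8:
  fixes VG VH :: "'a set" and EG EH :: "('a \<times> 'a) set"
  assumes "digraph VG EG" and "digraph VH EH" and "VG \<inter> VH = {}"
  shows "dpw (VG \<union> VH) (disj_union_arcs EG EH) = max (dpw VG EG) (dpw VH EH)
    \<and> dpw (VG \<union> VH) (order_arcs VG EG VH EH) = max (dpw VG EG) (dpw VH EH)
    \<and> (\<forall>E \<in> directed_union_arcs VG EG VH EH.
           dpw (VG \<union> VH) E = max (dpw VG EG) (dpw VH EH))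
    \<and> dpw (VG \<union> VH) (series_arcs VG EG VH EH)
           = min (dpw VG EG + int (card VH)) (dpw VH EH + int (card VG))"
proof -
  have directed: "dpw (VG \<union> VH) (EG \<union> EH \<union> F) = max (dpw VG EG) (dpw VH EH)"
    if "F \<subseteq> VG \<times> VH" for F
    using dpw_directed_union[OF assms that] .
  have "dpw (VG \<union> VH) (series_arcs VG EG VH EH) \<le> dpw VH EH + int (card VG)"
    using dpw_series_le[OF assms(2,1)] by (simp add: series_arcs_commute Un_commute)
  then have series: "dpw (VG \<union> VH) (series_arcs VG EG VH EH)
      = min (dpw VG EG + int (card VH)) (dpw VH EH + int (card VG))"
    using dpw_series_le[OF assms(1,2)] dpw_series_ge[OF assms] by linarith
  show ?thesis
    using directed[of "{}"] directed[of "VG \<times> VH"] directed series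
    unfolding disj_union_arcs_def order_arcs_def directed_union_arcs_def by auto
qed

end
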